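(* Let $J\subseteq S$. For every $w\in\mathfrak{S}_n^J$ there is a unique $w'\in\mathfrak{S}_n^J(231)$ such that $\mathrm{inv}(w')$ is the maximum under containment among all $J$-compressed inversion sets $\mathrm{inv}(u)$, $u\in\mathfrak{S}_n^J$, with $\mathrm{inv}(u)\subseteq\mathrm{inv}(w)$; that is, $\mathrm{inv}(w')\subseteq\mathrm{inv}(w)$, $\mathrm{inv}(w')$ is $J$-compressed, and every $u\in\mathfrak{S}_n^J$ with $\mathrm{inv}(u)$ $J$-compressed and $\mathrm{inv}(u)\subseteq\mathrm{inv}(w)$ satisfies $\mathrm{inv}(u)\subseteq\mathrm{inv}(w')$.
   Context: $\mathfrak{S}_n$ is the symmetric group on $[n]$, $s_i=(i,i+1)$, $S=\{s_1,\dots,s_{n-1}\}$, one-line notation $w=w_1\cdots w_n$, $\mathrm{inv}(w)=\{(i,j):i<j,\ w_i>w_j\}$, $\mathrm{des}(w)=\{(i,j)\in\mathrm{inv}(w):w_i=w_j+1\}$. For $J\subseteq S$, $\mathfrak{S}_n^J$ is the set of $w$ with $w_i<w_{i+1}$ whenever $s_i\in J$. Writing $J=S\setminus\{s_{j_1},\dots,s_{j_r}\}$ with $j_1<\dots<j_r$, the $J$-regions are $\{1,\dots,j_1\},\{j_1+1,\dots,j_2\},\dots,\{j_r+1,\dots,n\}$. $\mathfrak{S}_n^J(231)$ is the set of $w\in\mathfrak{S}_n^J$ admitting no indices $i<j<k$ in pairwise different $J$-regions with $w_k<w_i<w_j$ and $w_i=w_k+1$. A set $\mathrm{inv}(w)$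 is $J$-compressed if whenever $i<j<k$ lie in pairwise different $J$-regions and $(i,k)\in\mathrm{des}(w)$, then $(i,j)\in\mathrm{inv}(w)$. *)

theory Defs
  imports "HOL-Combinatorics.Permutations"
begin

(* Permutations of [n] = {1..n} are functions w :: nat => nat with w permutes {1..n};
   w i is the i-th letter of the one-line notation.
   A subset J of S = {s_1,...,s_{n-1}} is represented by the index set
   J :: nat set, J \<subseteq> {1..<n}, where i \<in> J means s_i \<in> J. *)

definition perms :: "nat \<Rightarrow> (nat \<Rightarrow> nat) set" where
  "perms n = {w. w permutes {1..n}}"

definition inv_set :: "nat \<Rightarrow> (nat \<Rightarrow> nat) \<Rightarrow> (nat \<times> nat) set" where
  "inv_set n w = {(i, j). 1 \<le> i \<and> i < j \<and> j \<le> n \<and> w i > w j}"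

definition des_set :: "nat \<Rightarrow> (nat \<Rightarrow> nat) \<Rightarrow> (nat \<times> nat) set" where
  "des_set n w = {(i, j). (i, j) \<in> inv_set n w \<and> w i = w j + 1}"

definition parabolic :: "nat \<Rightarrow> nat set \<Rightarrow> (nat \<Rightarrow> nat) set" where
  "parabolic n J = {w \<in> perms n. \<forall>i \<in> J. w i < w (Suc i)}"

(* index of the J-region containing position i: the number of j_t = indices of
   s_{j_t} \<notin> J with j_t < i. Regions {1..j_1}, {j_1+1..j_2}, ... *)
definition region :: "nat \<Rightarrow> nat set \<Rightarrow> nat \<Rightarrow> nat" where
  "region n J i = card {k \<in> {1..<n} - J. k < i}"

definition diff_regions :: "nat \<Rightarrow> nat set \<Rightarrow> nat \<Rightarrow> nat \<Rightarrow> nat \<Rightarrow> bool" where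
  "diff_regions n J i j k \<longleftrightarrow>
     region n J i \<noteq> region n J j \<and> region n J j \<noteq> region n J k \<and> region n J i \<noteq> region n J k"

definition avoid231 :: "nat \<Rightarrow> nat set \<Rightarrow> (nat \<Rightarrow> nat) set" where
  "avoid231 n J = {w \<in> parabolic n J. \<not> (\<exists>i j k. 1 \<le> i \<and> i < j \<and> j < k \<and> k \<le> n \<and>
       diff_regions n J i j k \<and> w k < w i \<and> w i < w j \<and> w i = w k + 1)}"

definition compressed :: "nat \<Rightarrow> nat set \<Rightarrow> (nat \<Rightarrow> nat) \<Rightarrow> bool" where
  "compressed n J w \<longleftrightarrow> (\<forall>i j k. 1 \<le> i \<and> i < j \<and> j < k \<and> k \<le> n \<and>
       diff_regions n J i j k \<and> (i, k) \<in> des_set n w \<longrightarrow> (i, j) \<in> inv_set n w)"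

end

theory Submission
  imports Defs
begin

(* If inv(w) is not J-compressed, a witness (i, j, k) gives a descent (i, k) with (i, j) not an
   inversion. Swapping the adjacent values w i and w k removes exactly the inversion (i, k) and
   stays in S_n^J. No J-compressed inv(u) contained in inv(w) contains (i, k): every position
   strictly between i and k has its w-value, hence its u-value, outside the interval from the
   value at k to the value at i, and then compression of inv(u) is violated. Induction on
   |inv(w)| yields the greatest such u; it avoids 231 because such a pattern violates
   compression directly, and it is unique since a permutation is determined by its inversions. *)

lemma nat_boundary_step:
  fixes a b :: nat
  assumes "a \<le> b" "\<not> P a" "P b"
  shows "\<exists>y. a < y \<and> y \<le> b \<and> \<not> P (y - 1) \<and> P y"
  using assms
proof (induction b)
  case (Suc b)
  show ?case
  proof (cases "P b")
    case True
    with Suc.prems have "a \<le> b" by (metis le_Suc_eq)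
    with Suc.IH Suc.prems True show ?thesis by (meson le_Suc_eq)
  next
    case False
    with Suc.prems have "a < Suc b" by (metis le_neq_implies_less)
    with False Suc.prems show ?thesis by auto
  qed
qed simp

lemma region_mono: "i \<le> i' \<Longrightarrow> region n J i \<le> region n J i'"
  unfolding region_def by (rule card_mono) auto

lemma diff_regions_iff:
  assumes "i \<le> j" "j \<le> k"
  shows "diff_regions n J i j k \<longleftrightarrow> region n J i < region n J j \<and> region n J j < region n J k"
  using region_mono[OF assms(1), of n J] region_mono[OF assms(2), of n J]
  unfolding diff_regions_def by auto

lemma diff_regions_widen:
  assumes "diff_regions n J i j k" "a \<le> i" "i \<le> j" "j \<le> k" "k \<le> b"
  shows "diff_regions n J a j b"
  using assms region_mono[of a i n J] region_mono[of k b n J]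
  by (simp add: diff_regions_iff)

lemma inv_set_finite: "finite (inv_set n w)"
  by (rule finite_subset[of _ "{1..n} \<times> {1..n}"]) (auto simp: inv_set_def)

lemma permutes_less_iff_not_inv:
  assumes "w permutes {1..n}" "1 \<le> p" "p < q" "q \<le> n"
  shows "w p < w q \<longleftrightarrow> (p, q) \<notin> inv_set n w"
proof -
  have "w p \<noteq> w q"
    using assms(3) by (auto simp: inj_eq[OF permutes_inj[OF assms(1)]])
  then show ?thesis using assms unfolding inv_set_def by auto
qed

lemma permutes_eq_card_below:
  fixes w :: "nat \<Rightarrow> nat"
  assumes "w permutes {1..n}" "x \<in> {1..n}"
  shows "w x = card {p \<in> {1..n}. w p \<le> w x}"
proof -
  let ?below = "{p \<in> {1..n}. w p \<le> w x}"
  have "w ` ?below = {1..w x}"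
  proof
    show "w ` ?below \<subseteq> {1..w x}"
    proof (rule image_subsetI)
      fix p assume "p \<in> ?below"
      then show "w p \<in> {1..w x}"
        using permutes_in_image[OF assms(1), of p] by auto
    qed
    show "{1..w x} \<subseteq> w ` ?below"
    proof
      fix y assume "y \<in> {1..w x}"
      moreover have "w x \<in> {1..n}"
        using assms(2) permutes_in_image[OF assms(1)] by blast
      ultimately have "y \<in> {1..n}"
        by auto
      then have "y \<in> w ` {1..n}"
        unfolding permutes_image[OF assms(1)] .
      with \<open>y \<in> {1..w x}\<close> show "y \<in> w ` ?below"
        by auto
    qed
  qed
  moreover have "bij_betw w ?below (w ` ?below)"
    by (rule bij_betw_subset[OF permutes_imp_bij[OF assms(1)]]) auto
  ultimately show ?thesis
    by (simp add: bij_betw_same_card)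
qed

lemma permutes_eq_if_inv_set_eq:
  assumes "v permutes {1..n}" "w permutes {1..n}" "inv_set n v = inv_set n w"
  shows "v = w"
proof
  fix x
  show "v x = w x"
  proof (cases "x \<in> {1..n}")
    case True
    have "v p \<le> v x \<longleftrightarrow> w p \<le> w x" if "p \<in> {1..n}" for p
    proof (cases p x rule: linorder_cases)
      case less
      have "(p, x) \<in> inv_set n v \<longleftrightarrow> (p, x) \<in> inv_set n w" using assms(3) by simp
      then have "v x < v p \<longleftrightarrow> w x < w p" using less that True by (auto simp: inv_set_def)
      then show ?thesis by (meson not_le)
    next
      case greater
      have "(x, p) \<in> inv_set n v \<longleftrightarrow> (x, p) \<in> inv_set n w" using assms(3) by simp
      then have "v p < v x \<longleftrightarrow> w p < w x" using greater that True by (auto simp: inv_set_def)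
      moreover have "v p \<noteq> v x" "w p \<noteq> w x"
        using greater
        by (simp_all add: inj_eq[OF permutes_inj[OF assms(1)]] inj_eq[OF permutes_inj[OF assms(2)]])
      ultimately show ?thesis by auto
    qed simp
    then have "{p \<in> {1..n}. v p \<le> v x} = {p \<in> {1..n}. w p \<le> w x}" by blast
    then show ?thesis
      using permutes_eq_card_below[OF assms(1) True] permutes_eq_card_below[OF assms(2) True]
      by simp
  next
    case False
    then show ?thesis using assms(1,2) by (simp add: permutes_not_in)
  qed
qed

lemma parabolic_if_inv_set_subset:
  assumes "J \<subseteq> {1..<n}" "w \<in> parabolic n J" "v permutes {1..n}" "inv_set n v \<subseteq> inv_set n w"
  shows "v \<in> parabolic n J"
  unfolding parabolic_def perms_def
proof (intro CollectI conjI ballI)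
  fix p assume "p \<in> J"
  then have p: "1 \<le> p" "p < Suc p" "Suc p \<le> n" "w p < w (Suc p)"
    using assms(1,2) by (auto simp: parabolic_def)
  then have "(p, Suc p) \<notin> inv_set n v"
    using assms(4) by (auto simp: inv_set_def)
  then show "v p < v (Suc p)"
    using permutes_less_iff_not_inv[OF assms(3) p(1-3)] by blast
qed (fact assms(3))

lemma transpose_succ_less_iff:
  fixes b x y :: nat
  assumes "x \<noteq> y"
  shows "transpose (Suc b) b x < transpose (Suc b) b y \<longleftrightarrow>
    (x < y \<and> \<not> (x = b \<and> y = Suc b)) \<or> (x = Suc b \<and> y = b)"
  using assms unfolding transpose_def
  by (cases "x = Suc b"; cases "x = b"; cases "y = Suc b"; cases "y = b") auto

lemma inv_set_transpose_des:
  assumes "w permutes {1..n}" "(i, k) \<in> des_set n w"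
  shows "inv_set n (transpose (w i) (w k) \<circ> w) = inv_set n w - {(i, k)}"
proof -
  have wik: "w i = Suc (w k)" and "i < k"
    using assms(2) by (auto simp: des_set_def inv_set_def)
  have "transpose (w i) (w k) (w q) < transpose (w i) (w k) (w p) \<longleftrightarrow> w q < w p \<and> \<not> (p = i \<and> q = k)"
    if "p < q" for p q
  proof -
    have "w p \<noteq> w q" "w q = w k \<longleftrightarrow> q = k" "w p = w i \<longleftrightarrow> p = i"
      "w p = w k \<longleftrightarrow> p = k" "w q = w i \<longleftrightarrow> q = i"
      using that by (auto simp: inj_eq[OF permutes_inj[OF assms(1)]])
    then show ?thesis
      unfolding wik using transpose_succ_less_iff[of "w q" "w p" "w k"] that \<open>i < k\<close> by auto
  qed
  then show ?thesis unfolding inv_set_def by auto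
qed

lemma permutes_transpose_comp:
  assumes "w permutes {1..n}" "i \<in> {1..n}" "k \<in> {1..n}"
  shows "transpose (w i) (w k) \<circ> w permutes {1..n}"
proof -
  have "w i \<in> {1..n}" "w k \<in> {1..n}"
    using assms(2,3) permutes_in_image[OF assms(1)] by blast+
  then show ?thesis by (intro permutes_compose[OF assms(1)] permutes_swap_id) auto
qed

(* Among the values from u k to u i pick consecutive ones y - 1, y placed right resp. left of j:
   they form a descent (a, b) with a \<le> i and k \<le> b, to which compression applies. *)
lemma compressed_no_separated_inversion:
  assumes u: "u permutes {1..n}" and comp: "compressed n J u"
    and ijk: "1 \<le> i" "i < j" "j < k" "k \<le> n" "diff_regions n J i j k"
    and "u i < u j"
    and sep: "\<And>p. i < p \<Longrightarrow> p < k \<Longrightarrow> u p < u k \<or> u i < u p"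
  shows "\<not> u k < u i"
proof
  assume "u k < u i"
  define P where "P y \<longleftrightarrow> (\<exists>a\<in>{1..n}. a < j \<and> u a = y)" for y
  have "\<not> P (u k)"
    using ijk by (auto simp: P_def inj_eq[OF permutes_inj[OF u]])
  moreover have "P (u i)"
    using ijk by (auto simp: P_def)
  ultimately obtain y where y: "u k < y" "y \<le> u i" "\<not> P (y - 1)" "P y"
    using nat_boundary_step[of "u k" "u i" P] \<open>u k < u i\<close> by auto
  then obtain a where a: "a \<in> {1..n}" "a < j" "u a = y"
    by (auto simp: P_def)
  have "u k \<in> {1..n}" "u i \<in> {1..n}"
    using ijk permutes_in_image[OF u] by auto
  then have "y - 1 \<in> u ` {1..n}"
    using y permutes_image[OF u] by auto
  then obtain b where b: "b \<in> {1..n}" "u b = y - 1"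
    by auto
  have "j < b"
    using b y \<open>u i < u j\<close> by (cases b j rule: linorder_cases) (auto simp: P_def)
  have "a \<le> i"
    using sep[of a] a y ijk by fastforce
  have "k \<le> b"
    using sep[of b] b y \<open>j < b\<close> ijk by fastforce
  have "diff_regions n J a j b"
    using diff_regions_widen[OF ijk(5) \<open>a \<le> i\<close> _ _ \<open>k \<le> b\<close>] ijk by simp
  moreover have "(a, b) \<in> des_set n u"
    using a b y \<open>j < b\<close> by (auto simp: des_set_def inv_set_def)
  moreover have "1 \<le> a" "b \<le> n"
    using a(1) b(1) by auto
  ultimately have "(a, j) \<in> inv_set n u"
    using comp \<open>a < j\<close> \<open>j < b\<close> unfolding compressed_def by blast
  then show False
    using a y \<open>u i < u j\<close> by (auto simp: inv_set_def)
qed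

lemma compressed_below_avoids_des:
  assumes w: "w permutes {1..n}" and des: "(i, k) \<in> des_set n w"
    and ijk: "i < j" "j < k" "diff_regions n J i j k" and ij: "(i, j) \<notin> inv_set n w"
    and u: "u permutes {1..n}" "compressed n J u" and below: "inv_set n u \<subseteq> inv_set n w"
  shows "(i, k) \<notin> inv_set n u"
proof
  assume "(i, k) \<in> inv_set n u"
  have bounds: "1 \<le> i" "k \<le> n" and wik: "w i = Suc (w k)"
    using des by (auto simp: des_set_def inv_set_def)
  have "u i < u j"
    using ij below permutes_less_iff_not_inv[OF u(1) \<open>1 \<le> i\<close> \<open>i < j\<close>] ijk bounds by auto
  moreover have "u p < u k \<or> u i < u p" if "i < p" "p < k" for p
  proof -
    have "w p \<noteq> w i" "w p \<noteq> w k"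
      using that by (auto simp: inj_eq[OF permutes_inj[OF w]])
    then consider "w i < w p" | "w p < w k"
      using wik by linarith
    then show ?thesis
    proof cases
      case 1
      then have "(i, p) \<notin> inv_set n u"
        using below by (auto simp: inv_set_def)
      then show ?thesis
        using permutes_less_iff_not_inv[OF u(1), of i p] that bounds by auto
    next
      case 2
      then have "(p, k) \<notin> inv_set n u"
        using below by (auto simp: inv_set_def)
      then show ?thesis
        using permutes_less_iff_not_inv[OF u(1), of p k] that bounds by auto
    qed
  qed
  ultimately have "\<not> u k < u i"
    using compressed_no_separated_inversion[OF u bounds(1) ijk(1,2) bounds(2) ijk(3)] by blast
  with \<open>(i, k) \<in> inv_set n u\<close> show False
    by (auto simp: inv_set_def)
qed

definition greatest_compressed_below :: "nat \<Rightarrow> nat set \<Rightarrow> (nat \<Rightarrow> nat) \<Rightarrow> (nat \<Rightarrow> nat) \<Rightarrow> bool" where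
  "greatest_compressed_below n J w w' \<longleftrightarrow>
     w' \<in> parabolic n J \<and> compressed n J w' \<and> inv_set n w' \<subseteq> inv_set n w \<and>
     (\<forall>u \<in> parabolic n J. compressed n J u \<and> inv_set n u \<subseteq> inv_set n w
        \<longrightarrow> inv_set n u \<subseteq> inv_set n w')"

lemma greatest_compressed_below_exists:
  assumes J: "J \<subseteq> {1..<n}" and "w \<in> parabolic n J"
  shows "\<exists>w'. greatest_compressed_below n J w w'"
  using assms(2)
proof (induction "card (inv_set n w)" arbitrary: w rule: less_induct)
  case less
  show ?case
  proof (cases "compressed n J w")
    case True
    with less.prems have "greatest_compressed_below n J w w"
      by (auto simp: greatest_compressed_below_def)
    then show ?thesis by blast
  next
    case False
    then obtain i j k where ijk: "1 \<le> i" "i < j" "j < k" "k \<le> n" "diff_regions n J i j k"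
      and des: "(i, k) \<in> des_set n w" and ij: "(i, j) \<notin> inv_set n w"
      unfolding compressed_def by blast
    have w: "w permutes {1..n}"
      using less.prems by (simp add: parabolic_def perms_def)
    define w1 where "w1 = transpose (w i) (w k) \<circ> w"
    have inv1: "inv_set n w1 = inv_set n w - {(i, k)}"
      unfolding w1_def by (rule inv_set_transpose_des[OF w des])
    have "w1 permutes {1..n}"
      unfolding w1_def using ijk by (intro permutes_transpose_comp[OF w]) auto
    then have "w1 \<in> parabolic n J"
      using parabolic_if_inv_set_subset[OF J less.prems] inv1 by blast
    moreover have "card (inv_set n w1) < card (inv_set n w)"
      unfolding inv1 using des by (intro card_Diff1_less inv_set_finite) (simp add: des_set_def)
    ultimately obtain w' where w': "greatest_compressed_below n J w1 w'"
      using less.hyps by blast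
    have "(i, k) \<notin> inv_set n u"
      if "u \<in> parabolic n J" "compressed n J u" "inv_set n u \<subseteq> inv_set n w" for u
      using compressed_below_avoids_des[OF w des ijk(2,3,5) ij _ that(2,3)] that(1)
      by (simp add: parabolic_def perms_def)
    then have "greatest_compressed_below n J w w'"
      using w' inv1 unfolding greatest_compressed_below_def by blast
    then show ?thesis by blast
  qed
qed

lemma avoid231_if_compressed:
  assumes "w \<in> parabolic n J" "compressed n J w"
  shows "w \<in> avoid231 n J"
  unfolding avoid231_def
proof (intro CollectI conjI notI)
  assume "\<exists>i j k. 1 \<le> i \<and> i < j \<and> j < k \<and> k \<le> n \<and>
    diff_regions n J i j k \<and> w k < w i \<and> w i < w j \<and> w i = w k + 1"
  then obtain i j k where ijk: "1 \<le> i" "i < j" "j < k" "k \<le> n" "diff_regions n J i j k"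
    and vals: "w k < w i" "w i < w j" "w i = w k + 1"
    by blast
  then have "(i, k) \<in> des_set n w"
    by (simp add: des_set_def inv_set_def)
  with assms(2) ijk have "(i, j) \<in> inv_set n w"
    unfolding compressed_def by blast
  with vals show False
    by (simp add: inv_set_def)
qed (fact assms(1))

lemma greatest_compressed_below_unique:
  assumes "greatest_compressed_below n J w v" "greatest_compressed_below n J w w'"
  shows "v = w'"
proof -
  have "inv_set n v = inv_set n w'"
    using assms unfolding greatest_compressed_below_def by blast
  with assms show ?thesis
    by (intro permutes_eq_if_inv_set_eq) (auto simp: greatest_compressed_below_def parabolic_def perms_def)
qed

theorem lemma3p8:
  fixes n :: nat and J :: "nat set" and w :: "nat \<Rightarrow> nat"
  assumes "J \<subseteq> {1..<n}"
    and "w \<in> parabolic n J"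
  shows "\<exists>!w'. w' \<in> avoid231 n J \<and> inv_set n w' \<subseteq> inv_set n w \<and> compressed n J w' \<and>
           (\<forall>u \<in> parabolic n J. compressed n J u \<and> inv_set n u \<subseteq> inv_set n w
              \<longrightarrow> inv_set n u \<subseteq> inv_set n w')"
proof -
  obtain w' where w': "greatest_compressed_below n J w w'"
    using greatest_compressed_below_exists[OF assms] by blast
  then have "w' \<in> avoid231 n J"
    by (simp add: avoid231_if_compressed greatest_compressed_below_def)
  moreover have "avoid231 n J \<subseteq> parabolic n J"
    by (auto simp: avoid231_def)
  ultimately show ?thesis
    using w' greatest_compressed_below_unique[OF _ w']
    unfolding greatest_compressed_below_def by (intro ex1I[of _ w']) blast+
qed

end
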